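(* For every $n\ge1$ and every unlabeled binary tree $T\in\mathrm{URL}_n$, there exists a bijection $\Omega$ from $\mathrm{RS}(T)$ to $\mathrm{And}^{II}(T)$.
   Context: A binary tree is a rooted tree in which every vertex has no child, a single left child, a single right child, or both. The map $\Psi$ sends a word $\pi$ of distinct integers to an increasing binary tree: $\Psi(\emptyset)=\emptyset$; otherwise write $\pi=\sigma\, i\,\tau$ with $i$ the least letter, and let $\Psi(\pi)$ have root $i$, left subtree $\Psi(\sigma)$, right subtree $\Psi(\tau)$. The shape of a labeled tree is its underlying unlabeled binary tree. $\mathrm{URL}_n$ is the set of unlabeled rooted binary trees with $n$ vertices in which no vertex has a left child but no right child. Andr\'e II permutations: the empty word and one-letter words are Andr\'e II; a word $\sigma$ of $n\ge2$ distinct integers, written $\sigma=\tau\,\min(\sigma)\,\tau'$, is Andr\'e II if $\tau,\tau'$ are Andr\'e II and the smallest letter of $\tau\tau'$ lies in $\tau'$. A permutation $\sigma$ of $[n]$ is simsun if $\sigma_n=n$ and for each $k\in[n]$ the subword formed by the letters $1,\dots,k$ has no index $i$ with $w_i>w_{i+1}>w_{i+2}$. $\mathrm{RS}(T)$ (resp. $\mathrm{And}^{II}(T)$) is the set of simsun (resp. Andr\'e II) permutations $\sigma$ of $[n]$ with $\mathrm{shape}(\Psi(\sigma))=T$. *)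

theory Defs
  imports Main "HOL-Library.Tree"
begin

text \<open>Words of distinct integers are represented as lists of naturals (only permutations
of [n] and their factors occur). Labeled binary trees are HOL-Library trees;
unlabeled binary trees are trees of type unit tree (Leaf = empty tree).\<close>

definition left_part :: "nat list \<Rightarrow> nat list" where
  "left_part xs = takeWhile (\<lambda>x. x \<noteq> Min (set xs)) xs"

definition right_part :: "nat list \<Rightarrow> nat list" where
  "right_part xs = tl (dropWhile (\<lambda>x. x \<noteq> Min (set xs)) xs)"

lemma length_takeWhile_lt: "x \<in> set xs \<Longrightarrow> \<not> P x \<Longrightarrow> length (takeWhile P xs) < length xs"
  by (induction xs) auto

lemma length_left_part: "xs \<noteq> [] \<Longrightarrow> length (left_part xs) < length xs"
proof -
  assume "xs \<noteq> []"
  then have "Min (set xs) \<in> set xs" by simp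
  then show ?thesis unfolding left_part_def
    by (intro length_takeWhile_lt) auto
qed

lemma length_right_part: "xs \<noteq> [] \<Longrightarrow> length (right_part xs) < length xs"
proof -
  assume "xs \<noteq> []"
  then have "Min (set xs) \<in> set xs" by simp
  then have "dropWhile (\<lambda>x. x \<noteq> Min (set xs)) xs \<noteq> []" by (simp add: dropWhile_eq_Nil_conv)
  then show ?thesis unfolding right_part_def
  proof -
    assume "dropWhile (\<lambda>x. x \<noteq> Min (set xs)) xs \<noteq> []"
    moreover have "length (dropWhile (\<lambda>x. x \<noteq> Min (set xs)) xs) \<le> length xs"
      by (rule length_dropWhile_le)
    ultimately show "length (tl (dropWhile (\<lambda>x. x \<noteq> Min (set xs)) xs)) < length xs"
      by (cases "dropWhile (\<lambda>x. x \<noteq> Min (set xs)) xs") auto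
  qed
qed

function Psi :: "nat list \<Rightarrow> nat tree" where
  "Psi xs = (if xs = [] then Leaf
             else Node (Psi (left_part xs)) (Min (set xs)) (Psi (right_part xs)))"
  by pat_completeness auto
termination
  by (relation "measure length") (auto simp: length_left_part length_right_part)

definition shape :: "'a tree \<Rightarrow> unit tree" where
  "shape t = map_tree (\<lambda>_. ()) t"

fun no_left_only :: "unit tree \<Rightarrow> bool" where
  "no_left_only Leaf = True"
| "no_left_only (Node l _ r) =
     (\<not> (l \<noteq> Leaf \<and> r = Leaf) \<and> no_left_only l \<and> no_left_only r)"

definition URL :: "nat \<Rightarrow> unit tree set" where
  "URL n = {T. size T = n \<and> no_left_only T}"

function andre_II :: "nat list \<Rightarrow> bool" where
  "andre_II xs = (if length xs \<le> 1 then True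
     else andre_II (left_part xs) \<and> andre_II (right_part xs) \<and>
          Min (set (left_part xs @ right_part xs)) \<in> set (right_part xs))"
  by pat_completeness auto
termination
  by (relation "measure length") (auto intro: length_left_part length_right_part)

definition perm_of :: "nat \<Rightarrow> nat list \<Rightarrow> bool" where
  "perm_of n \<sigma> \<longleftrightarrow> distinct \<sigma> \<and> set \<sigma> = {1..n}"

definition double_descent_free :: "nat list \<Rightarrow> bool" where
  "double_descent_free w \<longleftrightarrow>
     \<not> (\<exists>i. i + 2 < length w \<and> w ! i > w ! (i+1) \<and> w ! (i+1) > w ! (i+2))"

definition simsun :: "nat \<Rightarrow> nat list \<Rightarrow> bool" where
  "simsun n \<sigma> \<longleftrightarrow> perm_of n \<sigma> \<and> \<sigma> ! (n - 1) = n \<and>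
     (\<forall>k\<in>{1..n}. double_descent_free (filter (\<lambda>x. x \<le> k) \<sigma>))"

definition RS :: "nat \<Rightarrow> unit tree \<Rightarrow> nat list set" where
  "RS n T = {\<sigma>. simsun n \<sigma> \<and> shape (Psi \<sigma>) = T}"

definition AndII :: "nat \<Rightarrow> unit tree \<Rightarrow> nat list set" where
  "AndII n T = {\<sigma>. perm_of n \<sigma> \<and> andre_II \<sigma> \<and> shape (Psi \<sigma>) = T}"

end

theory Submission
  imports Defs "HOL-Library.Multiset"
begin

text \<open>Under \<open>Psi\<close>, words of distinct letters correspond to increasing binary trees with the
word as inorder traversal. A word is Andre II iff in its tree every vertex with a left child
also has a right child, labelled smaller than the left child. Restricting a word to
its letters \<open>\<le> k\<close> corresponds to pruning the tree at \<open>k\<close>, and a double descent of the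
restricted word shows up exactly as a vertex with only a left child in the left subtree of some
vertex of the right spine; so \<open>\<sigma>\<close> is simsun iff its last letter is \<open>n\<close> and every left
subtree hanging off the right spine of \<open>Psi \<sigma>\<close> is an Andre tree.

The bijection keeps the shape and all labels off the right spine, and moves every label of the
right spine one step down the spine: the root receives a new least label, the last spine label
\<open>n\<close> drops out, and finally all labels are shifted back into \<open>{1..n}\<close>. As \<open>T\<close> has no vertex
with only a left child, a spine vertex with a left child has a right child, which now carries the
former label of that vertex and hence is smaller than every label of the left subtree; the left
subtrees hanging off the spine were Andre trees already, so the result is an Andre tree. Moving
the spine labels back up inverts the map.\<close>

declare Psi.simps[simp del] andre_II.simps[simp del]

section \<open>Double descents\<close>

lemma double_descent_free_simps[simp]:
  "double_descent_free []"
  "double_descent_free [x]"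
  "double_descent_free [x, y]"
  "double_descent_free (x # y # z # ws) \<longleftrightarrow> \<not> (y < x \<and> z < y) \<and> double_descent_free (y # z # ws)"
proof -
  have ex_nat: "(\<exists>i. Q i) \<longleftrightarrow> Q 0 \<or> (\<exists>i. Q (Suc i))" for Q :: "nat \<Rightarrow> bool"
    by (metis not0_implies_Suc)
  show "double_descent_free (x # y # z # ws) \<longleftrightarrow> \<not> (y < x \<and> z < y) \<and> double_descent_free (y # z # ws)"
    unfolding double_descent_free_def by (subst ex_nat) auto
qed (auto simp: double_descent_free_def)

lemma double_descent_free_append:
  "double_descent_free (xs @ a # ys) \<longleftrightarrow>
     double_descent_free (xs @ [a]) \<and> double_descent_free (a # ys) \<and>
     \<not> (xs \<noteq> [] \<and> ys \<noteq> [] \<and> a < last xs \<and> hd ys < a)"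
proof (induction xs rule: induct_list012)
  case (2 x)
  then show ?case by (cases ys; cases "tl ys") auto
next
  case (3 x y zs)
  then show ?case by (cases zs) auto
qed simp

lemma double_descent_free_Cons_less:
  "ys = [] \<or> a < hd ys \<Longrightarrow> double_descent_free (a # ys) \<longleftrightarrow> double_descent_free ys"
  by (cases ys; cases "tl ys") auto

section \<open>Increasing trees and pruning\<close>

lemma shape_Leaf[simp]: "shape Leaf = Leaf"
  and shape_Node[simp]: "shape (Node l a r) = Node (shape l) () (shape r)"
  by (simp_all add: shape_def)

lemma shape_eq_Leaf_iff[simp]: "shape t = Leaf \<longleftrightarrow> t = Leaf"
  by (cases t) simp_all

lemma shape_map_tree[simp]: "shape (map_tree f t) = shape t"
  by (induction t) simp_all

fun root_val :: "'a tree \<Rightarrow> 'a" where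
  "root_val (Node l a r) = a"

fun increasing :: "('a::linorder) tree \<Rightarrow> bool" where
  "increasing Leaf = True"
| "increasing (Node l a r) =
     ((\<forall>x \<in> set_tree l \<union> set_tree r. a < x) \<and> increasing l \<and> increasing r)"

fun andre_tree :: "('a::linorder) tree \<Rightarrow> bool" where
  "andre_tree Leaf = True"
| "andre_tree (Node l a r) =
     (andre_tree l \<and> andre_tree r \<and> (l \<noteq> Leaf \<longrightarrow> r \<noteq> Leaf \<and> root_val r < root_val l))"

fun spine_all :: "('a tree \<Rightarrow> bool) \<Rightarrow> 'a tree \<Rightarrow> bool" where
  "spine_all P Leaf = True"
| "spine_all P (Node l a r) = (P l \<and> spine_all P r)"

fun prune :: "'a::linorder \<Rightarrow> 'a tree \<Rightarrow> 'a tree" where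
  "prune k Leaf = Leaf"
| "prune k (Node l a r) = (if a \<le> k then Node (prune k l) a (prune k r) else Leaf)"

lemma root_val_in_set_tree: "t \<noteq> Leaf \<Longrightarrow> root_val t \<in> set_tree t"
  by (cases t) auto

lemma increasing_root_val_le: "increasing t \<Longrightarrow> x \<in> set_tree t \<Longrightarrow> root_val t \<le> x"
  by (cases t) (auto intro: less_imp_le)

lemma increasing_root_val_eqI:
  assumes "increasing t" and "x \<in> set_tree t" and "\<And>y. y \<in> set_tree t \<Longrightarrow> x \<le> y"
  shows "root_val t = x"
  using assms increasing_root_val_le root_val_in_set_tree by (metis empty_iff eq_set_tree_empty order.antisym)

lemma Min_set_tree_increasing: "increasing t \<Longrightarrow> t \<noteq> Leaf \<Longrightarrow> Min (set_tree t) = root_val t"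
  by (intro Min_eqI) (auto simp: increasing_root_val_le root_val_in_set_tree)

lemma set_tree_prune: "set_tree (prune k t) \<subseteq> set_tree t"
  by (induction t) auto

lemma increasing_prune: "increasing t \<Longrightarrow> increasing (prune k t)"
  by (induction t) (use set_tree_prune in fastforce)+

lemma inorder_prune: "increasing t \<Longrightarrow> inorder (prune k t) = filter (\<lambda>x. x \<le> k) (inorder t)"
proof (induction t)
  case (Node l a r)
  then show ?case
    by (cases "a \<le> k") (fastforce simp: filter_empty_conv not_le intro: less_trans)+
qed simp

lemma prune_eq_Leaf_iff: "prune k t = Leaf \<longleftrightarrow> t = Leaf \<or> k < root_val t"
  by (cases t) auto

lemma prune_below_root: "increasing t \<Longrightarrow> \<forall>x \<in> set_tree t. k < x \<Longrightarrow> prune k t = Leaf"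
  by (cases t) auto

lemma prune_children_below_root:
  "increasing (Node l a r) \<Longrightarrow> k < a \<Longrightarrow> prune k l = Leaf \<and> prune k r = Leaf"
  by (auto intro!: prune_below_root dest: order.strict_trans)

lemma all_prune_Leaf_imp_iff:
  "(\<forall>k. prune k r = Leaf \<longrightarrow> prune k l = Leaf) \<longleftrightarrow>
     (l \<noteq> Leaf \<longrightarrow> r \<noteq> Leaf \<and> root_val r \<le> root_val l)"
  by (auto simp: prune_eq_Leaf_iff not_less)

lemma double_descent_free_inorder_snoc:
  fixes t :: "nat tree"
  assumes "increasing t" and "\<forall>x \<in> set_tree t. c < x"
  shows "double_descent_free (inorder t @ [c]) \<longleftrightarrow> no_left_only (shape t)"
  using assms
proof (induction t arbitrary: c)
  case (Node l a r)
  have last_l: "l \<noteq> Leaf \<Longrightarrow> a < last (inorder l)"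
    using Node.prems last_in_set[of "inorder l"] by auto
  have hd_r: "r \<noteq> Leaf \<Longrightarrow> a < hd (inorder r)"
    using Node.prems hd_in_set[of "inorder r"] by auto
  have IH_l: "double_descent_free (inorder l @ [a]) \<longleftrightarrow> no_left_only (shape l)"
    using Node.prems by (intro Node.IH(1)) auto
  show ?case
  proof (cases "r = Leaf")
    case True
    then show ?thesis
      using last_l IH_l Node.prems by (auto simp: double_descent_free_append[of "inorder l" a "[c]"])
  next
    case False
    have "double_descent_free (a # inorder r @ [c]) \<longleftrightarrow> no_left_only (shape r)"
      using Node.IH(2)[of c] Node.prems hd_r False
      by (subst double_descent_free_Cons_less) (auto simp: hd_append)
    then show ?thesis
      using False hd_r IH_l Node.prems
      by (auto simp: double_descent_free_append[of "inorder l" a "inorder r @ [c]"] hd_append)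
  qed
qed simp

lemma double_descent_free_inorder:
  fixes t :: "nat tree"
  assumes "increasing t"
  shows "double_descent_free (inorder t) \<longleftrightarrow> spine_all (\<lambda>s. no_left_only (shape s)) t"
  using assms
proof (induction t)
  case (Node l a r)
  have hd_r: "r \<noteq> Leaf \<Longrightarrow> a < hd (inorder r)"
    using Node.prems hd_in_set[of "inorder r"] by auto
  have "double_descent_free (inorder l @ [a]) \<longleftrightarrow> no_left_only (shape l)"
    using Node.prems by (intro double_descent_free_inorder_snoc) auto
  moreover have "double_descent_free (a # inorder r) \<longleftrightarrow> spine_all (\<lambda>s. no_left_only (shape s)) r"
    using Node hd_r by (subst double_descent_free_Cons_less) auto
  ultimately show ?case
    using hd_r by (auto simp: double_descent_free_append[of "inorder l" a "inorder r"])
qed simp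

lemma andre_tree_iff_prune:
  assumes "increasing t" and "distinct (inorder t)"
  shows "andre_tree t \<longleftrightarrow> (\<forall>k. no_left_only (shape (prune k t)))"
  using assms
proof (induction t)
  case (Node l a r)
  have "no_left_only (shape (prune k (Node l a r))) \<longleftrightarrow>
      (prune k r = Leaf \<longrightarrow> prune k l = Leaf) \<and>
      no_left_only (shape (prune k l)) \<and> no_left_only (shape (prune k r))" for k
    using prune_children_below_root[OF Node.prems(1)] by (cases "a \<le> k") (auto simp: not_le)
  then have "(\<forall>k. no_left_only (shape (prune k (Node l a r)))) \<longleftrightarrow>
      (l \<noteq> Leaf \<longrightarrow> r \<noteq> Leaf \<and> root_val r \<le> root_val l) \<and>
      (\<forall>k. no_left_only (shape (prune k l))) \<and> (\<forall>k. no_left_only (shape (prune k r)))"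
    by (simp add: all_conj_distrib all_prune_Leaf_imp_iff)
  moreover have "l \<noteq> Leaf \<Longrightarrow> r \<noteq> Leaf \<Longrightarrow> root_val r \<noteq> root_val l"
    using Node.prems root_val_in_set_tree[of l] root_val_in_set_tree[of r] by auto
  ultimately show ?case
    using Node by (auto simp: order.order_iff_strict)
qed simp

lemma spine_all_andre_tree_iff_prune:
  assumes "increasing t" and "distinct (inorder t)"
  shows "spine_all andre_tree t \<longleftrightarrow> (\<forall>k. spine_all (\<lambda>s. no_left_only (shape s)) (prune k t))"
  using assms
proof (induction t)
  case (Node l a r)
  have "spine_all (\<lambda>s. no_left_only (shape s)) (prune k (Node l a r)) \<longleftrightarrow>
      no_left_only (shape (prune k l)) \<and> spine_all (\<lambda>s. no_left_only (shape s)) (prune k r)" for k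
    using prune_children_below_root[OF Node.prems(1)] by (cases "a \<le> k") (auto simp: not_le)
  moreover have "andre_tree l \<longleftrightarrow> (\<forall>k. no_left_only (shape (prune k l)))"
    using Node.prems by (intro andre_tree_iff_prune) auto
  ultimately show ?case
    using Node by (simp add: all_conj_distrib)
qed simp

lemma spine_all_andre_tree_iff_double_descent_free:
  fixes t :: "nat tree"
  assumes "increasing t" and "distinct (inorder t)"
  shows "spine_all andre_tree t \<longleftrightarrow> (\<forall>k. double_descent_free (filter (\<lambda>x. x \<le> k) (inorder t)))"
  using assms
  by (simp add: spine_all_andre_tree_iff_prune double_descent_free_inorder increasing_prune
      flip: inorder_prune)

section \<open>The map Psi\<close>

lemma left_part_Min_right_part: "xs \<noteq> [] \<Longrightarrow> left_part xs @ Min (set xs) # right_part xs = xs"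
proof -
  assume "xs \<noteq> []"
  then have "Min (set xs) \<in> set xs" by simp
  then have "dropWhile (\<lambda>x. x \<noteq> Min (set xs)) xs = Min (set xs) # right_part xs"
    unfolding right_part_def
    by (metis (mono_tags, lifting) dropWhile_eq_Nil_conv hd_dropWhile list.collapse)
  then show ?thesis
    unfolding left_part_def by (metis takeWhile_dropWhile_id)
qed

lemma inorder_Psi[simp]: "inorder (Psi xs) = xs"
proof (induction xs rule: Psi.induct)
  case (1 xs)
  then show ?case
    by (subst Psi.simps) (auto simp: left_part_Min_right_part)
qed

lemma set_tree_Psi[simp]: "set_tree (Psi xs) = set xs"
  by (metis inorder_Psi set_inorder)

lemma increasing_Psi: "distinct xs \<Longrightarrow> increasing (Psi xs)"
proof (induction xs rule: Psi.induct)
  case (1 xs)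
  show ?case
  proof (cases "xs = []")
    case False
    let ?m = "Min (set xs)"
    have split: "left_part xs @ ?m # right_part xs = xs"
      using False by (rule left_part_Min_right_part)
    then have distinct: "distinct (left_part xs @ ?m # right_part xs)"
      using "1.prems" by simp
    have "\<forall>x \<in> set (left_part xs) \<union> set (right_part xs). ?m < x"
    proof
      fix x assume "x \<in> set (left_part xs) \<union> set (right_part xs)"
      moreover have "x \<in> set xs"
        using calculation split by (metis Un_iff set_append list.set_intros(2))
      ultimately have "x \<noteq> ?m"
        using distinct by auto
      with \<open>x \<in> set xs\<close> show "?m < x" by (simp add: order.not_eq_order_implies_strict)
    qed
    with 1 False distinct show ?thesis
      by (subst Psi.simps) simp
  qed (simp add: Psi.simps)
qed

lemma Min_left_part_right_part_inorder:
  assumes "increasing (Node l a r)" and "distinct (inorder (Node l a r))"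
  shows "Min (set (inorder (Node l a r))) = a"
    and "left_part (inorder (Node l a r)) = inorder l"
    and "right_part (inorder (Node l a r)) = inorder r"
proof -
  show Min: "Min (set (inorder (Node l a r))) = a"
    using assms(1) by (intro Min_eqI) (auto intro: less_imp_le)
  have "a \<notin> set (inorder l)"
    using assms(2) by simp
  then have "takeWhile (\<lambda>x. x \<noteq> a) (inorder l @ a # inorder r) = inorder l"
    and "dropWhile (\<lambda>x. x \<noteq> a) (inorder l @ a # inorder r) = a # inorder r"
    by (subst takeWhile_append2 dropWhile_append2; auto)+
  then show "left_part (inorder (Node l a r)) = inorder l"
    and "right_part (inorder (Node l a r)) = inorder r"
    unfolding left_part_def right_part_def Min by simp_all
qed

lemma Psi_inorder: "increasing t \<Longrightarrow> distinct (inorder t) \<Longrightarrow> Psi (inorder t) = t"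
proof (induction t)
  case (Node l a r)
  then show ?case
    using Min_left_part_right_part_inorder[OF Node.prems] by (subst Psi.simps) simp
qed (simp add: Psi.simps)

lemma Min_union_in_right_iff:
  assumes "increasing l" and "increasing r" and "set_tree l \<inter> set_tree r = {}"
  shows "Min (set_tree l \<union> set_tree r) \<in> set_tree r \<longleftrightarrow>
    r \<noteq> Leaf \<and> (l \<noteq> Leaf \<longrightarrow> root_val r < root_val l)"
proof (cases "l = Leaf \<or> r = Leaf")
  case False
  then have "Min (set_tree l \<union> set_tree r) = min (root_val l) (root_val r)"
    using assms by (simp add: Min_Un Min_set_tree_increasing)
  moreover have "root_val l \<notin> set_tree r" and "root_val r \<in> set_tree r"
    using assms(3) False root_val_in_set_tree by auto
  ultimately show ?thesis
    using False by (auto simp: min_def)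
qed auto

lemma andre_II_inorder_iff:
  assumes "increasing t" and "distinct (inorder t)"
  shows "andre_II (inorder t) \<longleftrightarrow> andre_tree t"
  using assms
proof (induction t)
  case (Node l a r)
  show ?case
  proof (cases "l = Leaf \<and> r = Leaf")
    case False
    then have "\<not> length (inorder (Node l a r)) \<le> 1"
      by (cases "inorder l"; cases "inorder r") auto
    moreover have "Min (set_tree l \<union> set_tree r) \<in> set_tree r \<longleftrightarrow>
        r \<noteq> Leaf \<and> (l \<noteq> Leaf \<longrightarrow> root_val r < root_val l)"
      using Node.prems by (intro Min_union_in_right_iff) auto
    ultimately show ?thesis
      using Node False Min_left_part_right_part_inorder[OF Node.prems]
      by (subst andre_II.simps) auto
  qed (simp add: andre_II.simps)
qed (simp add: andre_II.simps)

lemma bij_betw_Psi: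
  assumes "\<And>t. t \<in> S \<Longrightarrow> increasing t \<and> distinct (inorder t)"
  shows "bij_betw Psi {xs. Psi xs \<in> S} S"
  by (rule bij_betw_byWitness[where f' = inorder]) (auto simp: Psi_inorder assms)

section \<open>Simsun and Andre II permutations as trees\<close>

lemma perm_of_iff_mset: "perm_of n xs \<longleftrightarrow> mset xs = mset_set {1..n}"
proof
  assume "mset xs = mset_set {1..n}"
  moreover from this have "set xs = {1..n}"
    by (metis finite_atLeastAtMost finite_set_mset_mset_set set_mset_mset)
  ultimately show "perm_of n xs"
    unfolding perm_of_def by (metis card_distinct size_mset size_mset_set)
qed (metis perm_of_def mset_set_set)

lemma length_perm_of: "perm_of n xs \<Longrightarrow> length xs = n"
  by (metis perm_of_iff_mset card_atLeastAtMost diff_Suc_1 size_mset size_mset_set)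

lemma all_double_descent_free_filter_iff:
  assumes "set xs = {1..n}" and "1 \<le> n"
  shows "(\<forall>k \<in> {1..n}. double_descent_free (filter (\<lambda>x. x \<le> k) xs)) \<longleftrightarrow>
    (\<forall>k. double_descent_free (filter (\<lambda>x. x \<le> k) xs))"
proof (intro iffI allI)
  fix k
  assume ddf: "\<forall>k \<in> {1..n}. double_descent_free (filter (\<lambda>x. x \<le> k) xs)"
  consider "k = 0" | "k \<in> {1..n}" | "n < k"
    by fastforce
  then show "double_descent_free (filter (\<lambda>x. x \<le> k) xs)"
  proof cases
    case 1
    then have "filter (\<lambda>x. x \<le> k) xs = []"
      using assms(1) by (auto simp: filter_empty_conv)
    then show ?thesis by simp
  next
    case 3
    then have "filter (\<lambda>x. x \<le> k) xs = filter (\<lambda>x. x \<le> n) xs"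
      using assms(1) by (auto intro: filter_cong)
    then show ?thesis
      using ddf assms(2) by simp
  qed (use ddf in blast)
qed simp

definition simsun_trees :: "nat \<Rightarrow> unit tree \<Rightarrow> nat tree set" where
  "simsun_trees n T = {t. increasing t \<and> perm_of n (inorder t) \<and> last (inorder t) = n \<and>
     spine_all andre_tree t \<and> shape t = T}"

definition andre_trees :: "nat \<Rightarrow> unit tree \<Rightarrow> nat tree set" where
  "andre_trees n T = {t. increasing t \<and> perm_of n (inorder t) \<and> andre_tree t \<and> shape t = T}"

lemma RS_eq_Psi_preimage:
  assumes "1 \<le> n"
  shows "RS n T = {\<sigma>. Psi \<sigma> \<in> simsun_trees n T}"
proof -
  have "simsun n \<sigma> \<longleftrightarrow> increasing (Psi \<sigma>) \<and> perm_of n \<sigma> \<and> last \<sigma> = n \<and>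
      spine_all andre_tree (Psi \<sigma>)" for \<sigma>
  proof (cases "perm_of n \<sigma>")
    case True
    then have "distinct \<sigma>" and set: "set \<sigma> = {1..n}" and "length \<sigma> = n"
      by (auto simp: perm_of_def length_perm_of)
    moreover from this have "\<sigma> ! (n - 1) = last \<sigma>"
      using assms by (subst last_conv_nth) auto
    ultimately show ?thesis
      using True increasing_Psi[of \<sigma>] spine_all_andre_tree_iff_double_descent_free[of "Psi \<sigma>"]
        all_double_descent_free_filter_iff[OF set assms]
      by (simp add: simsun_def)
  qed (simp add: simsun_def)
  then show ?thesis
    by (auto simp: RS_def simsun_trees_def)
qed

lemma AndII_eq_Psi_preimage: "AndII n T = {\<sigma>. Psi \<sigma> \<in> andre_trees n T}"
proof -
  have "andre_II \<sigma> \<longleftrightarrow> andre_tree (Psi \<sigma>)" if "distinct \<sigma>" for \<sigma>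
    using andre_II_inorder_iff[of "Psi \<sigma>"] increasing_Psi[OF that] that by simp
  then show ?thesis
    by (auto simp: AndII_def andre_trees_def perm_of_def increasing_Psi)
qed

section \<open>Moving labels along the right spine\<close>

lemma increasing_map_tree:
  "strict_mono_on (set_tree t) f \<Longrightarrow> increasing (map_tree f t) \<longleftrightarrow> increasing t"
proof (induction t)
  case (Node l a r)
  have "strict_mono_on (set_tree l) f" and "strict_mono_on (set_tree r) f"
    using Node.prems by (auto elim: monotone_on_subset)
  moreover have "(\<forall>x \<in> set_tree l \<union> set_tree r. f a < f x) \<longleftrightarrow> (\<forall>x \<in> set_tree l \<union> set_tree r. a < x)"
    using strict_mono_on_less[OF Node.prems] by auto
  ultimately show ?case
    using Node.IH by (simp add: tree.set_map flip: image_Un)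
qed simp

lemma root_val_map_tree: "t \<noteq> Leaf \<Longrightarrow> root_val (map_tree f t) = f (root_val t)"
  by (cases t) auto

lemma andre_tree_map_tree:
  "strict_mono_on (set_tree t) f \<Longrightarrow> andre_tree (map_tree f t) \<longleftrightarrow> andre_tree t"
proof (induction t)
  case (Node l a r)
  have "strict_mono_on (set_tree l) f" and "strict_mono_on (set_tree r) f"
    using Node.prems by (auto elim: monotone_on_subset)
  moreover have "l \<noteq> Leaf \<Longrightarrow> r \<noteq> Leaf \<Longrightarrow>
      f (root_val r) < f (root_val l) \<longleftrightarrow> root_val r < root_val l"
    using strict_mono_on_less[OF Node.prems] root_val_in_set_tree by auto
  ultimately show ?case
    using Node.IH by (auto simp: root_val_map_tree)
qed simp

fun spine_push :: "'a tree \<Rightarrow> 'a \<Rightarrow> 'a tree" where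
  "spine_push Leaf c = Leaf"
| "spine_push (Node l b r) c = Node l c (spine_push r b)"

fun spine_pull :: "'a tree \<Rightarrow> 'a \<Rightarrow> 'a tree" where
  "spine_pull Leaf c = Leaf"
| "spine_pull (Node l a r) c = Node l (if r = Leaf then c else root_val r) (spine_pull r c)"

lemma spine_push_eq_Leaf_iff[simp]: "spine_push t c = Leaf \<longleftrightarrow> t = Leaf"
  by (cases t) auto

lemma spine_pull_eq_Leaf_iff[simp]: "spine_pull t c = Leaf \<longleftrightarrow> t = Leaf"
  by (cases t) auto

lemma shape_spine_push[simp]: "shape (spine_push t c) = shape t"
  by (induction t arbitrary: c) auto

lemma shape_spine_pull[simp]: "shape (spine_pull t c) = shape t"
  by (induction t) auto

lemma root_val_spine_push: "t \<noteq> Leaf \<Longrightarrow> root_val (spine_push t c) = c"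
  by (cases t) auto

lemma spine_pull_spine_push: "t \<noteq> Leaf \<Longrightarrow> spine_pull (spine_push t c) (last (inorder t)) = t"
proof (induction t arbitrary: c)
  case (Node l b r)
  then show ?case
    by (cases "r = Leaf") (auto simp: root_val_spine_push)
qed simp

lemma spine_push_spine_pull: "t \<noteq> Leaf \<Longrightarrow> spine_push (spine_pull t c) (root_val t) = t"
proof (induction t)
  case (Node l a r)
  then show ?case
    by (cases "r = Leaf") auto
qed simp

lemma last_inorder_spine_pull: "t \<noteq> Leaf \<Longrightarrow> last (inorder (spine_pull t c)) = c"
proof (induction t)
  case (Node l a r)
  then show ?case
    by (cases "r = Leaf") auto
qed simp

lemma mset_inorder_spine_push:
  "t \<noteq> Leaf \<Longrightarrow> mset (inorder (spine_push t c)) + {#last (inorder t)#} = mset (inorder t) + {#c#}"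
proof (induction t arbitrary: c)
  case (Node l b r)
  then show ?case
    by (cases "r = Leaf") auto
qed simp

lemma mset_inorder_spine_pull:
  "t \<noteq> Leaf \<Longrightarrow> mset (inorder (spine_pull t c)) + {#root_val t#} = mset (inorder t) + {#c#}"
proof (induction t)
  case (Node l a r)
  then show ?case
    by (cases "r = Leaf") (auto simp: add.commute add.left_commute)
qed simp

lemma set_tree_spine_push: "set_tree (spine_push t c) \<subseteq> insert c (set_tree t)"
  by (induction t arbitrary: c) auto

lemma set_tree_spine_pull: "set_tree (spine_pull t c) \<subseteq> insert c (set_tree t)"
  by (induction t) (auto dest: root_val_in_set_tree)

lemma increasing_spine_push:
  "increasing t \<Longrightarrow> \<forall>x \<in> set_tree t. c < x \<Longrightarrow> increasing (spine_push t c)"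
proof (induction t arbitrary: c)
  case (Node l b r)
  then show ?case
    using set_tree_spine_push[of r b] by (auto dest: order.strict_trans)
qed simp

lemma andre_tree_spine_push:
  "increasing t \<Longrightarrow> spine_all andre_tree t \<Longrightarrow> no_left_only (shape t) \<Longrightarrow>
    andre_tree (spine_push t c)"
proof (induction t arbitrary: c)
  case (Node l b r)
  have "l \<noteq> Leaf \<Longrightarrow> b < root_val l"
    using Node.prems(1) root_val_in_set_tree[of l] by auto
  then show ?case
    using Node by (auto simp: root_val_spine_push)
qed simp

lemma spine_pull_label_cases:
  "increasing t \<Longrightarrow> x \<in> set_tree (spine_pull t c) \<Longrightarrow> x = c \<or> root_val t < x"
proof (induction t)
  case (Node l a r)
  then show ?case
    using set_tree_spine_pull[of r c] root_val_in_set_tree[of r] by (auto split: if_splits)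
qed simp

lemma increasing_spine_pull:
  "increasing t \<Longrightarrow> andre_tree t \<Longrightarrow> \<forall>x \<in> set_tree t. x < c \<Longrightarrow> increasing (spine_pull t c)"
proof (induction t)
  case (Node l a r)
  show ?case
  proof (cases "r = Leaf")
    case False
    have "root_val r < x" if "x \<in> set_tree l \<union> set_tree (spine_pull r c)" for x
    proof -
      have "root_val r < c"
        using Node.prems(3) False root_val_in_set_tree[of r] by auto
      moreover have "x \<in> set_tree l \<Longrightarrow> root_val r < root_val l \<and> root_val l \<le> x"
        using Node.prems(1,2) increasing_root_val_le[of l x] by auto
      ultimately show ?thesis
        using that spine_pull_label_cases[of r x c] Node.prems(1) by (auto dest: order.strict_trans2)
    qed
    then show ?thesis
      using Node False by auto
  qed (use Node in simp)
qed simp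

lemma spine_all_andre_tree_spine_pull: "andre_tree t \<Longrightarrow> spine_all andre_tree (spine_pull t c)"
  by (induction t) auto

lemma mset_set_atLeastAtMost_add_0:
  "mset_set {1..n} + {#0::nat#} = mset_set {0..<n} + {#n#}"
proof -
  have "{0..n} = insert 0 {1..n}"
    by auto
  then have "mset_set {0..n} = mset_set {1..n} + {#0#}"
    by simp
  moreover have "{0..n} = insert n {0..<n}"
    by auto
  then have "mset_set {0..n} = mset_set {0..<n} + {#n#}"
    by simp
  ultimately show ?thesis
    by simp
qed

lemma spine_push_mem_andre_trees:
  assumes "t \<in> simsun_trees n T" and "1 \<le> n" and "no_left_only T"
  shows "map_tree Suc (spine_push t 0) \<in> andre_trees n T"
proof -
  let ?s = "spine_push t 0"
  have t: "increasing t" "mset (inorder t) = mset_set {1..n}" "last (inorder t) = n"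
      "spine_all andre_tree t" "shape t = T"
    using assms(1) by (simp_all add: simsun_trees_def perm_of_iff_mset)
  have "set_tree t = {1..n}"
    using assms(1) by (simp add: simsun_trees_def perm_of_def)
  then have "t \<noteq> Leaf" and labels_pos: "\<forall>x \<in> set_tree t. 0 < x"
    using assms(2) by auto
  have "mset (inorder ?s) + {#n#} = mset_set {0..<n} + {#n#}"
    using mset_inorder_spine_push[OF \<open>t \<noteq> Leaf\<close>] t(2,3) mset_set_atLeastAtMost_add_0 by simp
  then have "mset (map Suc (inorder ?s)) = mset_set {1..n}"
    by (simp add: image_mset_mset_set atLeastLessThanSuc_atLeastAtMost)
  moreover have "increasing ?s" and "andre_tree ?s"
    using t labels_pos assms(3) by (auto intro: increasing_spine_push andre_tree_spine_push)
  moreover have "strict_mono_on (set_tree ?s) Suc"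
    by (simp add: strict_mono_on_def)
  ultimately show ?thesis
    using t(5) by (simp add: andre_trees_def perm_of_iff_mset inorder_map increasing_map_tree
        andre_tree_map_tree)
qed

lemma spine_pull_mem_simsun_trees:
  assumes "s \<in> andre_trees n T" and "1 \<le> n"
  shows "spine_pull (map_tree (\<lambda>x. x - 1) s) n \<in> simsun_trees n T"
proof -
  let ?s = "map_tree (\<lambda>x. x - 1) s"
  let ?t = "spine_pull ?s n"
  have s: "increasing s" "mset (inorder s) = mset_set {1..n}" "andre_tree s" "shape s = T"
    using assms(1) by (simp_all add: andre_trees_def perm_of_iff_mset)
  have "set_tree s = {1..n}"
    using assms(1) by (simp add: andre_trees_def perm_of_def)
  then have "s \<noteq> Leaf" and "root_val s = 1"
    using assms(2) by (auto intro: increasing_root_val_eqI[OF s(1)])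
  have "strict_mono_on (set_tree s) (\<lambda>x. x - 1)"
    using \<open>set_tree s = {1..n}\<close> by (auto simp: strict_mono_on_def)
  then have "increasing ?s" and "andre_tree ?s"
    using s by (simp_all add: increasing_map_tree andre_tree_map_tree)
  have "(\<lambda>x. x - 1) ` {1..n} = {0..<n}"
    by (force simp: image_iff)
  then have "mset (inorder ?s) = mset_set {0..<n}"
    using s(2) by (simp add: inorder_map) (subst image_mset_mset_set; auto simp: inj_on_def)
  then have "set_tree ?s = {0..<n}"
    by (metis finite_atLeastLessThan finite_set_mset_mset_set set_inorder set_mset_mset)
  have "mset (inorder ?t) + {#0#} = mset_set {1..n} + {#0#}"
    using mset_inorder_spine_pull[of ?s n] \<open>s \<noteq> Leaf\<close> \<open>root_val s = 1\<close>
      \<open>mset (inorder ?s) = mset_set {0..<n}\<close> mset_set_atLeastAtMost_add_0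
    by (simp add: root_val_map_tree)
  moreover have "increasing ?t"
    using \<open>increasing ?s\<close> \<open>andre_tree ?s\<close> \<open>set_tree ?s = {0..<n}\<close> by (simp add: increasing_spine_pull)
  ultimately show ?thesis
    using \<open>andre_tree ?s\<close> \<open>s \<noteq> Leaf\<close> s(4)
    by (simp add: simsun_trees_def perm_of_iff_mset last_inorder_spine_pull spine_all_andre_tree_spine_pull)
qed

lemma bij_betw_simsun_trees_andre_trees:
  assumes "1 \<le> n" and "no_left_only T"
  shows "bij_betw (\<lambda>t. map_tree Suc (spine_push t 0)) (simsun_trees n T) (andre_trees n T)"
proof (rule bij_betw_byWitness[where f' = "\<lambda>s. spine_pull (map_tree (\<lambda>x. x - 1) s) n"])
  show "\<forall>t \<in> simsun_trees n T. spine_pull (map_tree (\<lambda>x. x - 1) (map_tree Suc (spine_push t 0))) n = t"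
  proof
    fix t assume t: "t \<in> simsun_trees n T"
    then have "perm_of n (inorder t)" and last: "last (inorder t) = n"
      by (simp_all add: simsun_trees_def)
    then have "t \<noteq> Leaf"
      using assms(1) by (auto simp: perm_of_def)
    with last show "spine_pull (map_tree (\<lambda>x. x - 1) (map_tree Suc (spine_push t 0))) n = t"
      using spine_pull_spine_push[of t 0] by (simp add: tree.map_comp o_def tree.map_ident)
  qed
  show "\<forall>s \<in> andre_trees n T. map_tree Suc (spine_push (spine_pull (map_tree (\<lambda>x. x - 1) s) n) 0) = s"
  proof
    fix s assume "s \<in> andre_trees n T"
    then have "increasing s" and labels: "set_tree s = {1..n}"
      by (simp_all add: andre_trees_def perm_of_def)
    then have "s \<noteq> Leaf" and "root_val s = 1"
      using assms(1) by (auto intro: increasing_root_val_eqI)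
    then have "spine_push (spine_pull (map_tree (\<lambda>x. x - 1) s) n) 0 = map_tree (\<lambda>x. x - 1) s"
      using spine_push_spine_pull[of "map_tree (\<lambda>x. x - 1) s" n] by (simp add: root_val_map_tree)
    then show "map_tree Suc (spine_push (spine_pull (map_tree (\<lambda>x. x - 1) s) n) 0) = s"
      using labels by (auto simp: tree.map_comp intro: tree.map_ident_strong)
  qed
  show "(\<lambda>t. map_tree Suc (spine_push t 0)) ` simsun_trees n T \<subseteq> andre_trees n T"
    using assms spine_push_mem_andre_trees by blast
  show "(\<lambda>s. spine_pull (map_tree (\<lambda>x. x - 1) s) n) ` andre_trees n T \<subseteq> simsun_trees n T"
    using assms(1) spine_pull_mem_simsun_trees by blast
qed

theorem theorem4p1:
  fixes n :: nat and T :: "unit tree"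
  assumes "n \<ge> 1" and "T \<in> URL n"
  shows "\<exists>\<Omega>. bij_betw \<Omega> (RS n T) (AndII n T)"
proof -
  have "bij_betw Psi (RS n T) (simsun_trees n T)"
    unfolding RS_eq_Psi_preimage[OF assms(1)]
    by (rule bij_betw_Psi) (simp add: simsun_trees_def perm_of_def)
  moreover have "bij_betw (\<lambda>t. map_tree Suc (spine_push t 0)) (simsun_trees n T) (andre_trees n T)"
    using assms by (intro bij_betw_simsun_trees_andre_trees) (simp_all add: URL_def)
  moreover have "bij_betw Psi (AndII n T) (andre_trees n T)"
    unfolding AndII_eq_Psi_preimage
    by (rule bij_betw_Psi) (simp add: andre_trees_def perm_of_def)
  ultimately show ?thesis
    by (meson bij_betw_trans bij_betw_inv_into)
qed

end
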